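(* Let $G$ be a (claw, bull)-free graph, let $C$ be an induced cycle of $G$ of length $k\ge 4$, and let $x\in N(C)$. Then $N(x)$ contains two consecutive vertices of $C$. Moreover, if $k\ge 5$, then $N(x)$ contains three consecutive vertices of $C$.
   Context: A claw is a graph isomorphic to $K_{1,3}$; a bull is the graph obtained from a triangle by adding two pendant edges at two different vertices. A graph is (claw, bull)-free if it has no induced claw and no induced bull. For a set $X$ of vertices, $N(X)=\big(\bigcup_{x\in X}N(x)\big)\setminus X$ is its open neighborhood; $N(C)$ means $N(V(C))$. *)

theory Defs
  imports Main
begin

definition simple_graph :: "'a set \<Rightarrow> ('a \<Rightarrow> 'a \<Rightarrow> bool) \<Rightarrow> bool" where
  "simple_graph V E \<longleftrightarrow> finite V \<and> (\<forall>u v. E u v \<longrightarrow> u \<in> V \<and> v \<in> V)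
     \<and> (\<forall>u v. E u v \<longrightarrow> E v u) \<and> (\<forall>u. \<not> E u u)"

definition has_induced_claw :: "'a set \<Rightarrow> ('a \<Rightarrow> 'a \<Rightarrow> bool) \<Rightarrow> bool" where
  "has_induced_claw V E \<longleftrightarrow> (\<exists>a\<in>V. \<exists>b\<in>V. \<exists>c\<in>V. \<exists>d\<in>V.
     distinct [a, b, c, d] \<and> E a b \<and> E a c \<and> E a d
     \<and> \<not> E b c \<and> \<not> E b d \<and> \<not> E c d)"

definition has_induced_bull :: "'a set \<Rightarrow> ('a \<Rightarrow> 'a \<Rightarrow> bool) \<Rightarrow> bool" where
  "has_induced_bull V E \<longleftrightarrow> (\<exists>x\<in>V. \<exists>y\<in>V. \<exists>z\<in>V. \<exists>u\<in>V. \<exists>v\<in>V.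
     distinct [x, y, z, u, v] \<and> E x y \<and> E y z \<and> E x z \<and> E u x \<and> E v y
     \<and> \<not> E u y \<and> \<not> E u z \<and> \<not> E u v \<and> \<not> E v x \<and> \<not> E v z)"

definition claw_bull_free :: "'a set \<Rightarrow> ('a \<Rightarrow> 'a \<Rightarrow> bool) \<Rightarrow> bool" where
  "claw_bull_free V E \<longleftrightarrow> \<not> has_induced_claw V E \<and> \<not> has_induced_bull V E"

definition induced_cycle :: "'a set \<Rightarrow> ('a \<Rightarrow> 'a \<Rightarrow> bool) \<Rightarrow> (nat \<Rightarrow> 'a) \<Rightarrow> nat \<Rightarrow> bool" where
  "induced_cycle V E c k \<longleftrightarrow> k \<ge> 3 \<and> inj_on c {..<k} \<and> c ` {..<k} \<subseteq> V
     \<and> (\<forall>i<k. \<forall>j<k. E (c i) (c j) \<longleftrightarrow> (j = (i + 1) mod k \<or> i = (j + 1) mod k))"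

definition nbhd :: "('a \<Rightarrow> 'a \<Rightarrow> bool) \<Rightarrow> 'a set \<Rightarrow> 'a set" where
  "nbhd E X = {y. \<exists>x\<in>X. E x y} - X"

end

theory Submission
  imports Defs
begin

text \<open>Let x see the cycle vertex c i. If x saw neither neighbour of c i on the cycle, then c i
  with x and its two cycle neighbours would be a claw (they are non-adjacent since k \<ge> 4). So
  x sees two consecutive vertices c j, c (j+1). If x saw neither c (j-1) nor c (j+2), then the
  triangle x, c j, c (j+1) with pendants c (j-1), c (j+2) would be a bull (these are
  non-adjacent since k \<ge> 5). Rotating the cycle reduces both arguments to the vertices
  c 0, ..., c 3 of an induced path.\<close>

lemma claw_free_path_centre_nbr:
  assumes "simple_graph V E" "\<not> has_induced_claw V E"
    and "E a b" "E b d" "\<not> E a d" "a \<noteq> d"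
    and "x \<notin> {a, d}" "E x b"
  shows "E x a \<or> E x d"
proof (rule ccontr)
  assume "\<not> (E x a \<or> E x d)"
  moreover have "distinct [b, x, a, d]" "{a, b, d, x} \<subseteq> V" "E b x" "E b a"
    using assms unfolding simple_graph_def by auto
  ultimately have "has_induced_claw V E"
    using assms unfolding simple_graph_def has_induced_claw_def by (metis insert_subset)
  with assms(2) show False ..
qed

lemma bull_free_path_inner_nbrs:
  assumes "simple_graph V E" "\<not> has_induced_bull V E"
    and "E a b" "E b d" "E d e" "\<not> E a d" "\<not> E a e" "\<not> E b e" "distinct [a, b, d, e]"
    and "x \<notin> {a, b, d, e}" "E x b" "E x d"
  shows "E x a \<or> E x e"
proof (rule ccontr)
  assume "\<not> (E x a \<or> E x e)"
  moreover have "distinct [b, d, x, a, e]" "{a, b, d, e, x} \<subseteq> V"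
    using assms unfolding simple_graph_def by auto
  ultimately have "has_induced_bull V E"
    using assms unfolding simple_graph_def has_induced_bull_def by (metis insert_subset)
  with assms(2) show False ..
qed

lemma mod_add_left_cancel_nat:
  fixes r a b k :: nat
  shows "(r + a) mod k = (r + b) mod k \<longleftrightarrow> a mod k = b mod k"
  by (simp add: mod_eq_iff_dvd_symdiff_nat)

lemma induced_cycle_rotate:
  assumes "induced_cycle V E c k"
  shows "induced_cycle V E (\<lambda>j. c ((r + j) mod k)) k"
proof -
  have k: "k \<ge> 3" and inj: "inj_on c {..<k}" and in_V: "c ` {..<k} \<subseteq> V"
    and adj: "\<And>i j. i < k \<Longrightarrow> j < k \<Longrightarrow> E (c i) (c j) \<longleftrightarrow> (j = (i + 1) mod k \<or> i = (j + 1) mod k)"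
    using assms unfolding induced_cycle_def by blast+
  have shift_succ: "(r + a) mod k = Suc (r + a') mod k \<longleftrightarrow> a = Suc a' mod k"
    if "a < k" for a a'
    using mod_add_left_cancel_nat[of r a k "Suc a'"] that by simp
  have "inj_on (\<lambda>j. c ((r + j) mod k)) {..<k}"
  proof (rule inj_onI)
    fix a b assume "a \<in> {..<k}" "b \<in> {..<k}" "c ((r + a) mod k) = c ((r + b) mod k)"
    with inj k have "(r + a) mod k = (r + b) mod k"
      by (simp add: inj_on_eq_iff)
    with \<open>a \<in> {..<k}\<close> \<open>b \<in> {..<k}\<close> show "a = b"
      by (simp add: mod_add_left_cancel_nat)
  qed
  moreover have "(\<lambda>j. c ((r + j) mod k)) ` {..<k} \<subseteq> V"
    using in_V k by auto
  moreover have "E (c ((r + a) mod k)) (c ((r + b) mod k)) \<longleftrightarrow> (b = (a + 1) mod k \<or> a = (b + 1) mod k)"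
    if "a < k" "b < k" for a b
    using adj[of "(r + a) mod k" "(r + b) mod k"] k that
    by (simp add: mod_Suc_eq shift_succ)
  ultimately show ?thesis
    using k unfolding induced_cycle_def by blast
qed

lemma mod_pred_add_Suc:
  fixes i k n :: nat
  assumes "0 < k"
  shows "(i + k - 1 + Suc n) mod k = (i + n) mod k"
proof -
  have "i + k - 1 + Suc n = i + n + k"
    using assms by simp
  then show ?thesis
    by (metis mod_add_self2)
qed

lemma induced_cycle_adj_no_wrap:
  assumes "induced_cycle V E c k" "i + 1 < k" "j + 1 < k"
  shows "E (c i) (c j) \<longleftrightarrow> j = i + 1 \<or> i = j + 1"
  using assms unfolding induced_cycle_def by auto

lemma claw_free_cycle_nbr_consecutive:
  assumes "simple_graph V E" "\<not> has_induced_claw V E" "induced_cycle V E c k" "k \<ge> 4"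
    and "x \<notin> c ` {..<k}" "i < k" "E x (c i)"
  shows "\<exists>j<k. E x (c j) \<and> E x (c ((j + 1) mod k))"
proof -
  define r where "r = i + k - 1"
  define c' where "c' j = c ((r + j) mod k)" for j
  have cyc: "induced_cycle V E c' k"
    unfolding c'_def by (rule induced_cycle_rotate[OF assms(3)])
  have c'_Suc: "c' (Suc n) = c ((i + n) mod k)" for n
    using assms(4) mod_pred_add_Suc[of k i n] by (simp add: c'_def r_def)
  have "E (c' 0) (c' 1)" "E (c' 1) (c' 2)" "\<not> E (c' 0) (c' 2)"
    using induced_cycle_adj_no_wrap[OF cyc] assms(4) by simp_all
  moreover have "c' 0 \<noteq> c' 2"
    using cyc assms(4) unfolding induced_cycle_def by (auto dest: inj_onD)
  moreover have "x \<notin> {c' 0, c' 2}"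
    using assms(5) assms(4) by (auto simp: c'_def)
  moreover have "E x (c' 1)"
    using assms(6,7) c'_Suc[of 0] by simp
  ultimately have "E x (c' 0) \<or> E x (c' 2)"
    using claw_free_path_centre_nbr[OF assms(1,2)] by blast
  with \<open>E x (c' 1)\<close> obtain m where "E x (c' m)" "E x (c' (Suc m))"
    by (metis numeral_2_eq_2 One_nat_def)
  then show ?thesis
    using assms(4) by (intro exI[of _ "(r + m) mod k"]) (simp add: c'_def mod_Suc_eq)
qed

lemma bull_free_cycle_nbr_three_consecutive:
  assumes "simple_graph V E" "\<not> has_induced_bull V E" "induced_cycle V E c k" "k \<ge> 5"
    and "x \<notin> c ` {..<k}" "i < k" "E x (c i)" "E x (c ((i + 1) mod k))"
  shows "\<exists>j<k. E x (c j) \<and> E x (c ((j + 1) mod k)) \<and> E x (c ((j + 2) mod k))"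
proof -
  define r where "r = i + k - 1"
  define c' where "c' j = c ((r + j) mod k)" for j
  have cyc: "induced_cycle V E c' k"
    unfolding c'_def by (rule induced_cycle_rotate[OF assms(3)])
  have c'_Suc: "c' (Suc n) = c ((i + n) mod k)" for n
    using assms(4) mod_pred_add_Suc[of k i n] by (simp add: c'_def r_def)
  have "E (c' 0) (c' 1)" "E (c' 1) (c' 2)" "E (c' 2) (c' 3)"
    "\<not> E (c' 0) (c' 2)" "\<not> E (c' 0) (c' 3)" "\<not> E (c' 1) (c' 3)"
    using induced_cycle_adj_no_wrap[OF cyc] assms(4) by simp_all
  moreover have "distinct [c' 0, c' 1, c' 2, c' 3]"
    using cyc assms(4) unfolding induced_cycle_def by (auto dest: inj_onD)
  moreover have "x \<notin> {c' 0, c' 1, c' 2, c' 3}"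
    using assms(5) assms(4) by (auto simp: c'_def)
  moreover have "E x (c' 1)" "E x (c' 2)"
    using assms(6-8) c'_Suc[of 0] c'_Suc[of 1] by (simp_all add: numeral_2_eq_2)
  ultimately have "E x (c' 0) \<or> E x (c' 3)"
    using bull_free_path_inner_nbrs[OF assms(1,2)] by blast
  with \<open>E x (c' 1)\<close> \<open>E x (c' 2)\<close> obtain m
    where "E x (c' m)" "E x (c' (Suc m))" "E x (c' (Suc (Suc m)))"
    by (metis numeral_3_eq_3 numeral_2_eq_2 One_nat_def)
  then show ?thesis
    using assms(4) by (intro exI[of _ "(r + m) mod k"]) (simp add: c'_def mod_Suc_eq mod_Suc_Suc_eq)
qed

theorem lemma2:
  fixes V :: "'a set" and E :: "'a \<Rightarrow> 'a \<Rightarrow> bool" and c :: "nat \<Rightarrow> 'a" and k :: nat and x :: 'a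
  assumes "simple_graph V E"
    and "claw_bull_free V E"
    and "induced_cycle V E c k"
    and "k \<ge> 4"
    and "x \<in> nbhd E (c ` {..<k})"
  shows "(\<exists>i<k. E x (c i) \<and> E x (c ((i + 1) mod k)))
    \<and> (k \<ge> 5 \<longrightarrow> (\<exists>i<k. E x (c i) \<and> E x (c ((i + 1) mod k)) \<and> E x (c ((i + 2) mod k))))"
proof -
  have no_claw: "\<not> has_induced_claw V E" and no_bull: "\<not> has_induced_bull V E"
    using assms(2) unfolding claw_bull_free_def by blast+
  obtain i where "i < k" "E (c i) x" and x_off: "x \<notin> c ` {..<k}"
    using assms(5) unfolding nbhd_def by blast
  then have "E x (c i)"
    using assms(1) unfolding simple_graph_def by blast
  then obtain j where j: "j < k" "E x (c j)" "E x (c ((j + 1) mod k))"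
    using claw_free_cycle_nbr_consecutive[OF assms(1) no_claw assms(3,4) x_off \<open>i < k\<close>] by blast
  moreover have "k \<ge> 5 \<longrightarrow> (\<exists>i<k. E x (c i) \<and> E x (c ((i + 1) mod k)) \<and> E x (c ((i + 2) mod k)))"
    using bull_free_cycle_nbr_three_consecutive[OF assms(1) no_bull assms(3) _ x_off j] by blast
  ultimately show ?thesis
    by blast
qed

end
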